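(* Let $T_n=T(x_1\dots x_n,k)$ with $x_1,\dots,x_n$ i.i.d. uniform on $\{B,b,R,r\}$ and $k$ uniform on $\{1,\dots,n\}$. Then for all $t>0$, $$\mathbb P\big[|\partial T_n|\ge t\sqrt n\big]\le 2\exp\!\left(-\frac{t^2}{32}\right),$$ where $|\partial T_n|$ is the number of boundary vertices of $T_n$.
   Context: Necklace construction (Sheffield). Given a finite word $X=x_1\dots x_n$ in $\{B,b,R,r\}$, build inductively disc triangulations $D_0\subset\dots\subset D_n$ in the closed upper half-plane with blue/red vertices and an active edge with blue endpoint $b_j$ and red endpoint $r_j$; initially non-positive integers are blue, positive integers red, $b_0=0,r_0=1$. Step according to $x_{j+1}$: (B) new blue vertex $b_{j+1}$, triangle $(b_j,r_j,b_{j+1})$, $r_{j+1}=r_j$; (R) new red vertex $r_{j+1}$, triangle $(b_j,r_j,r_{j+1})$, $b_{j+1}=b_j$; (b) $b_{j+1}$ = counterclockwise boundary neighbour of $b_j$ (or $m-1$, adding edge $[m-1,m]$, if $b_j=m\in\mathbb Z$), triangle $(b_{j+1},b_j,r_j)$, $r_{j+1}=r_j$; (r) $r_{j+1}$ = clockwise boundary neighbour of $r_j$ (or $m+1$, adding $[m,m+1]$, if $r_j=m\in\mathbb Z$), triangle $(b_j,r_j,r_{j+1})$, $b_{j+1}=b_j$. $T_+(X)$ is the disc triangulation $D_n$ (consisting of the $n$ triangles) rooted at the first triangle; $T(X,k)$ is $T_+(X)$ rerooted at the triangle created at step $k$. $\partial T_n$ is the set of vertices on the topological boundary of the support (union of the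 $n$ triangles) of $T_n$. *)

theory Defs
  imports "HOL-Probability.Probability"
begin

datatype letter = LB | Lb | LR | Lr

lemma UNIV_letter: "(UNIV :: letter set) = {LB, Lb, LR, Lr}"
  by (auto intro: letter.exhaust)

instance letter :: finite
  by standard (simp add: UNIV_letter)

text \<open>Vertices: the integer vertices on the real line (non-positive = blue,
  positive = red), and the vertex created at step j (j \<ge> 1).\<close>
datatype vtx = Z int | V nat

definition is_blue :: "letter list \<Rightarrow> vtx \<Rightarrow> bool" where
  "is_blue xs v = (case v of Z m \<Rightarrow> m \<le> 0 | V j \<Rightarrow> xs ! (j - 1) = LB)"

text \<open>State of the disc triangulation D_j:
  \<^item> bl: the part of the upper boundary path lying left of the active edge,
    listed from the active blue endpoint b_j going counterclockwise (leftwards);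
  \<^item> rl: the part of the upper boundary path right of the active edge,
    listed from the active red endpoint r_j going clockwise (rightwards);
  \<^item> tris: the triangles created so far, in order of creation.
  The full boundary of the (closed upper half-plane) disc consists of this
  upper path together with the segment of the real line between its ends.\<close>
type_synonym tri = "vtx \<times> vtx \<times> vtx"
type_synonym state = "vtx list \<times> vtx list \<times> tri list"

definition init_state :: state where
  "init_state = ([Z 0], [Z 1], [])"

fun step :: "nat \<Rightarrow> letter \<Rightarrow> state \<Rightarrow> state" where
  "step j LB (bs, rs, ts) =
     (V j # bs, rs, ts @ [(hd bs, hd rs, V j)])"
| "step j LR (bs, rs, ts) =
     (bs, V j # rs, ts @ [(hd bs, hd rs, V j)])"
| "step j Lb (bs, rs, ts) =
     (case hd bs of
        Z m \<Rightarrow> (Z (m - 1) # tl bs, rs, ts @ [(Z (m - 1), hd bs, hd rs)])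
      | V i \<Rightarrow> (tl bs, rs, ts @ [(hd (tl bs), hd bs, hd rs)]))"
| "step j Lr (bs, rs, ts) =
     (case hd rs of
        Z m \<Rightarrow> (bs, Z (m + 1) # tl rs, ts @ [(hd bs, hd rs, Z (m + 1))])
      | V i \<Rightarrow> (bs, tl rs, ts @ [(hd bs, hd rs, hd (tl rs))]))"

fun build :: "nat \<Rightarrow> letter list \<Rightarrow> state \<Rightarrow> state" where
  "build j [] s = s"
| "build j (x # xs) s = build (Suc j) xs (step (Suc j) x s)"

definition disc :: "letter list \<Rightarrow> state" where
  "disc xs = build 0 xs init_state"

definition tri_vertices :: "tri \<Rightarrow> vtx set" where
  "tri_vertices t = (case t of (a, b, c) \<Rightarrow> {a, b, c})"

definition disc_triangles :: "state \<Rightarrow> tri list" where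
  "disc_triangles s = snd (snd s)"

text \<open>Vertices on the topological boundary of the support (union of the
  triangles): the upper boundary path, together with all vertices lying on the
  real line (integer vertices of triangles).\<close>
definition boundary_vertices :: "state \<Rightarrow> vtx set" where
  "boundary_vertices s =
     (if disc_triangles s = [] then {}
      else set (fst s) \<union> set (fst (snd s)) \<union>
           {v. (\<exists>i. v = Z i) \<and> (\<exists>t\<in>set (disc_triangles s). v \<in> tri_vertices t)})"

text \<open>Rooted triangulations: the disc together with the index of the root
  triangle (triangle created at that step).\<close>
type_synonym rooted = "state \<times> nat"

definition T_plus :: "letter list \<Rightarrow> rooted" where
  "T_plus xs = (disc xs, 1)"

definition T :: "letter list \<Rightarrow> nat \<Rightarrow> rooted" where
  "T xs k = (disc xs, k)"

definition bdry :: "rooted \<Rightarrow> vtx set" where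
  "bdry T' = boundary_vertices (fst T')"

definition word_root_pmf :: "nat \<Rightarrow> (letter list \<times> nat) pmf" where
  "word_root_pmf n = pair_pmf (pmf_of_set {xs. length xs = n}) (pmf_of_set {1..n})"

end

theory Submission
  imports Defs
begin

(* The boundary of D_n consists of the upper boundary path (created vertices
   on the blue side left of the active edge and on the red side right of it,
   each side ending in one integer vertex) together with integer vertices on
   the real line.  Each side behaves like a reflected walk: a letter B (resp.
   R) pushes a new vertex, a letter b (resp. r) pops one, or, when no created
   vertex is left, moves the integer endpoint one step outwards.  Recording
   for each side the pair (h, a) = (created vertices, outward moves), the
   boundary has at most h + a + h' + a' + 2 vertices.

   It then bounds the exponential moment of h + a + h' + a'
   with the potential psi(h, a) = e^(3l/4 a) (e^(l h) + 7 e^(-l h)), whose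
   expectation after one uniform letter is at most cosh l times its value.
   A Chernoff bound, cosh l <= exp (l^2/2) (from Hoeffding's lemma) and the
   choice l = 3t/(4 sqrt n) give the theorem for sqrt n >= 4 and t > 9/2; the
   remaining ranges are trivial. *)

(* Counters of one side of the active edge: h is the number of created
   vertices on that part of the upper path, a how far its integer endpoint
   has moved away from the initial edge [0, 1]. *)
type_synonym side = "nat \<times> nat"

fun push :: "side \<Rightarrow> side" where
  "push (h, a) = (Suc h, a)"

fun pop :: "side \<Rightarrow> side" where
  "pop (h, a) = (if 0 < h then (h - 1, a) else (h, Suc a))"

fun side_size :: "side \<Rightarrow> nat" where
  "side_size (h, a) = h + a"

fun counter_step :: "letter \<Rightarrow> side \<times> side \<Rightarrow> side \<times> side" where
  "counter_step LB (sb, sr) = (push sb, sr)"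
| "counter_step Lb (sb, sr) = (pop sb, sr)"
| "counter_step LR (sb, sr) = (sb, push sr)"
| "counter_step Lr (sb, sr) = (sb, pop sr)"

definition path_inv :: "vtx list \<Rightarrow> nat \<Rightarrow> int \<Rightarrow> bool" where
  "path_inv p h m \<longleftrightarrow> (\<exists>vs. p = map V vs @ [Z m] \<and> length vs = h)"

definition span_inv :: "tri list \<Rightarrow> int \<Rightarrow> int \<Rightarrow> bool" where
  "span_inv ts lo hi \<longleftrightarrow> (\<forall>tr\<in>set ts. \<forall>i. Z i \<in> tri_vertices tr \<longrightarrow> lo \<le> i \<and> i \<le> hi)"

fun disc_inv :: "state \<Rightarrow> side \<times> side \<Rightarrow> bool" where
  "disc_inv (bs, rs, ts) ((h, a), (h', a')) \<longleftrightarrow>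
     path_inv bs h (- int a) \<and> path_inv rs h' (1 + int a') \<and> span_inv ts (- int a) (1 + int a')"

lemma path_inv_Cons: "path_inv p h m \<Longrightarrow> path_inv (V j # p) (Suc h) m"
  unfolding path_inv_def by (metis length_Cons list.simps(9) append_Cons)

lemma path_inv_0: "path_inv p 0 m \<longleftrightarrow> p = [Z m]"
  unfolding path_inv_def by auto

lemma path_inv_Suc:
  assumes "path_inv p (Suc h) m"
  obtains v where "p = V v # tl p" and "path_inv (tl p) h m"
proof -
  from assms obtain v vs where "p = V v # map V vs @ [Z m]" and "length vs = h"
    unfolding path_inv_def by (auto simp: length_Suc_conv)
  then show thesis using that unfolding path_inv_def by auto
qed

lemma path_inv_hd: "path_inv p h m \<Longrightarrow> Z i = hd p \<Longrightarrow> i = m"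
  unfolding path_inv_def by (auto simp: hd_append hd_map split: if_splits)

lemma span_inv_snoc:
  assumes "span_inv ts lo hi" "lo' \<le> lo" "hi \<le> hi'"
    and "\<And>i. Z i \<in> {u, v, w} \<Longrightarrow> lo' \<le> i \<and> i \<le> hi'"
  shows "span_inv (ts @ [(u, v, w)]) lo' hi'"
  using assms unfolding span_inv_def tri_vertices_def by fastforce

lemma disc_inv_step:
  assumes "disc_inv s c" shows "disc_inv (step j x s) (counter_step x c)"
proof -
  obtain bs rs ts h a h' a' where s: "s = (bs, rs, ts)" and c: "c = ((h, a), (h', a'))"
    by (metis prod.exhaust)
  have bs: "path_inv bs h (- int a)" and rs: "path_inv rs h' (1 + int a')"
    and ts: "span_inv ts (- int a) (1 + int a')" using assms by (simp_all add: s c)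
  have hd_bs: "\<And>i. Z i = hd bs \<Longrightarrow> i = - int a" and hd_rs: "\<And>i. Z i = hd rs \<Longrightarrow> i = 1 + int a'"
    using path_inv_hd bs rs by blast+
  show ?thesis
  proof (cases x)
    case LB
    then show ?thesis
      by (auto simp: s c path_inv_Cons[OF bs] rs intro!: span_inv_snoc[OF ts] dest: hd_bs hd_rs)
  next
    case LR
    then show ?thesis
      by (auto simp: s c path_inv_Cons[OF rs] bs intro!: span_inv_snoc[OF ts] dest: hd_bs hd_rs)
  next
    case Lb
    show ?thesis
    proof (cases h)
      case 0
      then have "bs = [Z (- int a)]" using bs path_inv_0 by simp
      then show ?thesis using Lb 0
        by (auto simp: s c path_inv_0 rs intro!: span_inv_snoc[OF ts] dest: hd_rs)
    next
      case (Suc k)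
      then obtain v where v: "bs = V v # tl bs" and tl_bs: "path_inv (tl bs) k (- int a)"
        using bs path_inv_Suc by blast
      have hd_tl: "Z i = hd (tl bs) \<Longrightarrow> i = - int a" for i using tl_bs path_inv_hd by blast
      show ?thesis unfolding s c Lb Suc
        by (subst v) (auto simp: tl_bs rs intro!: span_inv_snoc[OF ts] dest: hd_tl hd_rs)
    qed
  next
    case Lr
    show ?thesis
    proof (cases h')
      case 0
      then have "rs = [Z (1 + int a')]" using rs path_inv_0 by simp
      then show ?thesis using Lr 0
        by (auto simp: s c path_inv_0 bs intro!: span_inv_snoc[OF ts] dest: hd_bs)
    next
      case (Suc k)
      then obtain v where v: "rs = V v # tl rs" and tl_rs: "path_inv (tl rs) k (1 + int a')"
        using rs path_inv_Suc by blast
      have hd_tl: "Z i = hd (tl rs) \<Longrightarrow> i = 1 + int a'" for i using tl_rs path_inv_hd by blast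
      show ?thesis unfolding s c Lr Suc
        by (subst v) (auto simp: tl_rs bs intro!: span_inv_snoc[OF ts] dest: hd_tl hd_bs)
    qed
  qed
qed

lemma disc_inv_build: "disc_inv s c \<Longrightarrow> disc_inv (build j xs s) (fold counter_step xs c)"
  by (induction xs arbitrary: j s c) (simp_all add: disc_inv_step)

definition counters :: "letter list \<Rightarrow> side \<times> side" where
  "counters xs = fold counter_step xs ((0, 0), (0, 0))"

fun counter_size :: "side \<times> side \<Rightarrow> nat" where
  "counter_size (sb, sr) = side_size sb + side_size sr"

lemma disc_inv_disc: "disc_inv (disc xs) (counters xs)"
  unfolding disc_def counters_def
  by (rule disc_inv_build) (simp add: init_state_def path_inv_0 span_inv_def)

(* The boundary consists of the created vertices on the upper path and
   integer vertices in [-a, 1 + a']. *)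
lemma card_boundary_le_inv:
  assumes "disc_inv s ((h, a), (h', a'))"
  shows "card (boundary_vertices s) \<le> h + a + h' + a' + 2"
proof -
  obtain bs rs ts where s: "s = (bs, rs, ts)" by (metis prod.exhaust)
  from assms obtain vb vr where bs: "bs = map V vb @ [Z (- int a)]" "length vb = h"
    and rs: "rs = map V vr @ [Z (1 + int a')]" "length vr = h'"
    and ts: "span_inv ts (- int a) (1 + int a')"
    by (auto simp: s path_inv_def)
  let ?I = "{- int a .. 1 + int a'}"
  have "boundary_vertices s \<subseteq> V ` set vb \<union> V ` set vr \<union> Z ` ?I"
    using bs rs ts by (auto simp: s boundary_vertices_def disc_triangles_def span_inv_def)
  then have "card (boundary_vertices s) \<le> card (V ` set vb \<union> V ` set vr \<union> Z ` ?I)"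
    by (rule card_mono[rotated]) simp
  also have "\<dots> \<le> card (V ` set vb) + card (V ` set vr) + card (Z ` ?I)"
    by (meson card_Un_le le_trans add_le_mono order_refl)
  also have "\<dots> \<le> length vb + length vr + card ?I"
    by (intro add_mono card_image_le[THEN le_trans] card_length) simp_all
  finally show ?thesis using bs rs by simp
qed

lemma card_boundary_le_counters:
  "card (boundary_vertices (disc xs)) \<le> counter_size (counters xs) + 2"
proof -
  obtain h a h' a' where c: "counters xs = ((h, a), (h', a'))" by (metis prod.exhaust)
  have "card (boundary_vertices (disc xs)) \<le> h + a + h' + a' + 2"
    using disc_inv_disc[of xs] by (intro card_boundary_le_inv) (simp add: c)
  then show ?thesis by (simp add: c)
qed

lemma counter_size_fold: "counter_size (fold counter_step xs c) \<le> counter_size c + length xs"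
proof (induction xs arbitrary: c)
  case (Cons x xs)
  have "counter_size (counter_step x c) \<le> Suc (counter_size c)"
    by (cases x; cases c; auto)
  with Cons[of "counter_step x c"] show ?case by simp
qed simp

lemma sum_fold_words_le:
  fixes f :: "'s \<Rightarrow> real" and upd :: "'a::finite \<Rightarrow> 's \<Rightarrow> 's"
  assumes K: "K \<ge> 0" and one_step: "\<And>s. (\<Sum>x\<in>UNIV. f (upd x s)) \<le> K * f s"
  shows "(\<Sum>xs\<in>{xs. length xs = n}. f (fold upd xs s)) \<le> K ^ n * f s"
proof (induction n arbitrary: s)
  case 0
  have "{xs :: 'a list. length xs = 0} = {[]}" by auto
  then show ?case by simp
next
  case (Suc n)
  let ?W = "{xs :: 'a list. length xs = n}"
  have words: "{xs :: 'a list. length xs = Suc n} = (\<lambda>(x, xs). x # xs) ` (UNIV \<times> ?W)"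
    by (auto simp: length_Suc_conv image_iff)
  have inj: "inj_on (\<lambda>(x, xs). x # xs) (UNIV \<times> ?W)"
    by (auto simp: inj_on_def)
  have "(\<Sum>xs\<in>{xs. length xs = Suc n}. f (fold upd xs s))
      = (\<Sum>x\<in>UNIV. \<Sum>xs\<in>?W. f (fold upd xs (upd x s)))"
    unfolding words sum.reindex[OF inj] by (simp add: sum.cartesian_product case_prod_beta)
  also have "\<dots> \<le> (\<Sum>x\<in>UNIV. K ^ n * f (upd x s))"
    by (intro sum_mono Suc.IH)
  also have "\<dots> \<le> K ^ n * (K * f s)"
    by (simp add: sum_distrib_left[symmetric] K mult_left_mono one_step)
  finally show ?case by (simp add: ac_simps)
qed

lemma card_words: "card {xs :: 'a::finite list. length xs = n} = CARD('a) ^ n"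
  using card_lists_length_eq[of "UNIV :: 'a set" n] by simp

(* Potential for one side; the second summand controls the reflection at
   h = 0, where a pop moves the integer endpoint instead. *)
fun psi :: "real \<Rightarrow> side \<Rightarrow> real" where
  "psi l (h, a) = exp (3 * l / 4 * a) * (exp (l * h) + 7 * exp (- (l * h)))"

lemma psi_pos: "psi l s > 0"
  by (cases s) (simp add: add_pos_pos)

(* The inequality needed at the reflection h = 0. *)
lemma exp_three_quarters_le:
  fixes l :: real assumes "l \<ge> 0"
  shows "8 * exp (3 * l / 4) \<le> 7 * exp l + exp (- l)"
proof -
  define y where "y = exp (l / 4)"
  have y: "y \<ge> 1" using assms unfolding y_def by simp
  have e3: "exp (3 * l / 4) = y ^ 3" and e4: "exp l = y ^ 4"
    unfolding y_def by (subst exp_of_nat_mult[symmetric]; simp)+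
  have e5: "exp (- l) = 1 / y ^ 4" using e4 by (simp add: exp_minus field_simps)
  have "3 * y ^ 4 + 1 - 4 * y ^ 3 = (y - 1)^2 * (3 * y^2 + 2 * y + 1)"
    by (simp add: power2_eq_square power3_eq_cube power4_eq_xxxx algebra_simps)
  also have "\<dots> \<ge> 0" using y by simp
  finally have a1: "4 * y ^ 3 \<le> 3 * y ^ 4 + 1" by linarith
  have "2 * y^4 \<le> y^4 * y^4 + 1"
    using sum_squares_ge_zero[of "y^4 - 1" 0] by (simp add: power2_eq_square algebra_simps)
  then have a2: "2 \<le> y ^ 4 + 1 / y ^ 4" using y by (simp add: field_simps)
  show ?thesis unfolding e3 e4 e5 using a1 a2 by linarith
qed

lemma psi_push_pop:
  assumes "l \<ge> 0"
  shows "psi l (push s) + psi l (pop s) \<le> 2 * cosh l * psi l s"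
proof -
  obtain h a where s: "s = (h, a)" by (cases s)
  have cosh: "2 * cosh l = exp l + exp (- l)" by (simp add: cosh_field_def)
  show ?thesis
  proof (cases h)
    case (Suc k)
    have "psi l (push s) + psi l (pop s) = (exp l + exp (- l)) * psi l s"
      by (simp add: s Suc distrib_left distrib_right exp_add[symmetric] algebra_simps)
    then show ?thesis by (simp add: cosh)
  next
    case 0
    define E where "E = exp (3 * l / 4 * a)"
    have "psi l (push s) + psi l (pop s) = E * (exp l + 7 * exp (- l) + 8 * exp (3 * l / 4))"
      by (simp add: s 0 E_def distrib_left exp_add[symmetric] algebra_simps)
    also have "\<dots> \<le> E * (8 * (exp l + exp (- l)))"
      using exp_three_quarters_le[OF assms] by (intro mult_left_mono) (auto simp: E_def)
    also have "\<dots> = 2 * cosh l * psi l s" by (simp add: s 0 E_def cosh)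
    finally show ?thesis .
  qed
qed

fun potential :: "real \<Rightarrow> side \<times> side \<Rightarrow> real" where
  "potential l (sb, sr) = psi l sb * psi l sr"

lemma potential_step:
  assumes "l \<ge> 0"
  shows "(\<Sum>x\<in>UNIV. potential l (counter_step x c)) \<le> 4 * cosh l * potential l c"
proof -
  obtain sb sr where c: "c = (sb, sr)" by (cases c)
  have "(\<Sum>x\<in>UNIV. potential l (counter_step x c))
      = (psi l (push sb) + psi l (pop sb)) * psi l sr + psi l sb * (psi l (push sr) + psi l (pop sr))"
    by (simp add: UNIV_letter c algebra_simps)
  also have "\<dots> \<le> (2 * cosh l * psi l sb) * psi l sr + psi l sb * (2 * cosh l * psi l sr)"
    by (intro add_mono mult_right_mono mult_left_mono psi_push_pop assms)
       (auto intro: less_imp_le psi_pos)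
  also have "\<dots> = 4 * cosh l * potential l c" by (simp add: c)
  finally show ?thesis .
qed

lemma exp_size_le_psi:
  assumes "l \<ge> 0"
  shows "exp (3 * l / 4 * side_size s) \<le> psi l s"
proof -
  obtain h a where s: "s = (h, a)" by (cases s)
  have "exp (3 * l / 4 * side_size s) = exp (3 * l / 4 * a) * exp (3 * l / 4 * h)"
    by (simp add: s exp_add[symmetric] algebra_simps)
  also have "\<dots> \<le> exp (3 * l / 4 * a) * (exp (l * h) + 7 * exp (- (l * h)))"
    using assms by (intro mult_left_mono) (auto intro: add_increasing2 simp: mult_right_mono)
  finally show ?thesis by (simp add: s)
qed

lemma exp_size_le_potential:
  assumes "l \<ge> 0"
  shows "exp (3 * l / 4 * counter_size c) \<le> potential l c"
proof -
  obtain sb sr where c: "c = (sb, sr)" by (cases c)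
  have "exp (3 * l / 4 * counter_size c) = exp (3 * l / 4 * side_size sb) * exp (3 * l / 4 * side_size sr)"
    by (simp add: c exp_add[symmetric] algebra_simps)
  also have "\<dots> \<le> potential l c"
    unfolding c potential.simps
    by (intro mult_mono exp_size_le_psi assms) (auto intro: less_imp_le psi_pos)
  finally show ?thesis .
qed

lemma exp_moment_counters:
  assumes "l \<ge> 0"
  shows "(\<Sum>xs\<in>{xs. length xs = n}. exp (3 * l / 4 * counter_size (counters xs)))
           \<le> 64 * (4 * cosh l) ^ n"
proof -
  have "(\<Sum>xs\<in>{xs. length xs = n}. exp (3 * l / 4 * counter_size (counters xs)))
      \<le> (\<Sum>xs\<in>{xs. length xs = n}. potential l (fold counter_step xs ((0, 0), (0, 0))))"
    unfolding counters_def by (intro sum_mono exp_size_le_potential assms)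
  also have "\<dots> \<le> (4 * cosh l) ^ n * potential l ((0, 0), (0, 0))"
    using assms by (intro sum_fold_words_le potential_step) (simp add: cosh_field_def add_nonneg_nonneg)
  finally show ?thesis by simp
qed

(* Hoeffding's lemma for a uniform sign gives the standard bound on cosh. *)
lemma cosh_le_exp_square:
  fixes l :: real assumes "l > 0"
  shows "cosh l \<le> exp (l\<^sup>2 / 2)"
proof -
  let ?M = "measure_pmf (pmf_of_set {-1, 1::real})"
  interpret interval_bounded_random_variable ?M "\<lambda>x. x" "-1" "1"
    by unfold_locales (auto simp: prob_space_measure_pmf AE_measure_pmf_iff)
  have E0: "integral\<^sup>L ?M (\<lambda>x. x) = 0"
    by (subst integral_pmf_of_set) auto
  have "ennreal ((exp (-l) + exp l) / 2) = ennreal (exp (-l) + exp l) / 2"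
    by (simp add: divide_ennreal[symmetric] ennreal_numeral)
  also have "\<dots> = nn_integral ?M (\<lambda>x. exp (l * x))"
    by (subst nn_integral_pmf_of_set) (auto simp: ennreal_plus)
  also have "\<dots> \<le> ennreal (exp (l\<^sup>2 * (1 - (-1))\<^sup>2 / 8))"
    by (rule Hoeffdings_lemma_nn_integral_0[OF assms E0])
  finally have "(exp (-l) + exp l) / 2 \<le> exp (l\<^sup>2 * (1 - (-1))\<^sup>2 / 8)"
    by (subst (asm) ennreal_le_iff) auto
  then show ?thesis by (simp add: cosh_field_def add.commute)
qed

definition boundary_size :: "letter list \<Rightarrow> nat" where
  "boundary_size xs = card (boundary_vertices (disc xs))"

definition large_words :: "nat \<Rightarrow> real \<Rightarrow> letter list set" where
  "large_words n r = {xs. length xs = n \<and> r \<le> real (boundary_size xs)}"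

(* The root k does not affect the boundary, so the probability is a
   proportion of words. *)
lemma prob_large_boundary:
  "measure_pmf.prob (word_root_pmf n) {(xs, k). real (card (bdry (T xs k))) \<ge> r}
     = card (large_words n r) / 4 ^ n"
proof -
  let ?W = "{xs :: letter list. length xs = n}"
  have ne: "?W \<noteq> {}" by (auto intro: exI[of _ "replicate n LB"])
  have "{(xs, k). real (card (bdry (T xs k))) \<ge> r} = fst -` {xs. r \<le> real (boundary_size xs)}"
    by (auto simp: bdry_def T_def boundary_size_def)
  then have "measure_pmf.prob (word_root_pmf n) {(xs, k). real (card (bdry (T xs k))) \<ge> r}
      = measure_pmf.prob (map_pmf fst (word_root_pmf n)) {xs. r \<le> real (boundary_size xs)}"
    by simp
  also have "\<dots> = measure_pmf.prob (pmf_of_set ?W) {xs. r \<le> real (boundary_size xs)}"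
    by (simp add: word_root_pmf_def map_fst_pair_pmf)
  also have "\<dots> = card (large_words n r) / card ?W"
    by (subst measure_pmf_of_set[OF ne finite_list_length]) (simp add: large_words_def Int_def)
  finally show ?thesis by (simp add: card_words UNIV_letter)
qed

lemma boundary_size_le_length: "boundary_size xs \<le> length xs + 2"
  using card_boundary_le_counters[of xs] counter_size_fold[of xs "((0, 0), (0, 0))"]
  by (simp add: boundary_size_def counters_def)

lemma card_large_words_chernoff:
  assumes "l \<ge> 0"
  shows "card (large_words n r) / 4 ^ n \<le> 64 * cosh l ^ n * exp (- 3 * l / 4 * (r - 2))"
proof -
  let ?W = "{xs :: letter list. length xs = n}"
  have "card (large_words n r) * exp (3 * l / 4 * (r - 2))
      = (\<Sum>xs\<in>large_words n r. exp (3 * l / 4 * (r - 2)))" by simp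
  also have "\<dots> \<le> (\<Sum>xs\<in>large_words n r. exp (3 * l / 4 * counter_size (counters xs)))"
  proof (intro sum_mono)
    fix xs assume "xs \<in> large_words n r"
    then have "r - 2 \<le> counter_size (counters xs)"
      using card_boundary_le_counters[of xs] by (simp add: large_words_def boundary_size_def)
    then show "exp (3 * l / 4 * (r - 2)) \<le> exp (3 * l / 4 * counter_size (counters xs))"
      using assms by (simp add: mult_left_mono)
  qed
  also have "\<dots> \<le> (\<Sum>xs\<in>?W. exp (3 * l / 4 * counter_size (counters xs)))"
    by (rule sum_mono2[OF finite_list_length]) (auto simp: large_words_def)
  also have "\<dots> \<le> 64 * (4 * cosh l) ^ n" by (rule exp_moment_counters[OF assms])
  finally have "card (large_words n r) \<le> 64 * (4 * cosh l) ^ n * exp (- 3 * l / 4 * (r - 2))"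
    by (simp add: exp_minus field_simps)
  then show ?thesis by (simp add: field_simps)
qed

lemma exp_81_128_le_2: "exp (81 / 128 :: real) \<le> 2"
proof -
  have "943/1024 \<le> exp (- (81/1024::real))"
    using exp_ge_add_one_self[of "- (81/1024::real)"] by simp
  then have "exp (81/1024::real) \<le> 1024/943"
    by (simp add: exp_minus field_simps)
  then have "exp (81/1024::real) ^ 8 \<le> (1024/943) ^ 8" by (intro power_mono) auto
  also have "(1024/943::real) ^ 8 \<le> 2" by (simp add: power_divide)
  finally show ?thesis by (simp add: exp_of_nat_mult[symmetric])
qed

lemma exp_15_4_ge_32: "32 \<le> exp (15 / 4 :: real)"
proof -
  have "(32::real) \<le> (9/8) ^ 30" by (simp add: power_divide)
  also have "\<dots> \<le> exp (1/8) ^ 30"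
    using exp_ge_add_one_self[of "1/8::real"] by (intro power_mono) auto
  also have "\<dots> = exp (15/4 :: real)" by (simp add: exp_of_nat_mult[symmetric])
  finally show ?thesis .
qed

lemma tail_bound_trivial:
  fixes t :: real assumes "0 < t" "t \<le> 9/2"
  shows "1 \<le> 2 * exp (- (t ^ 2) / 32)"
proof -
  have "t ^ 2 / 32 \<le> 81 / 128"
    using mult_mono[OF assms(2) assms(2)] assms(1) by (simp add: power2_eq_square)
  then have "exp (t ^ 2 / 32) \<le> 2" using exp_81_128_le_2 by (meson exp_le_cancel_iff order_trans)
  then show ?thesis by (simp add: exp_minus field_simps)
qed

lemma large_words_empty:
  assumes "real n + 2 < r" shows "large_words n r = {}"
proof -
  have "real (boundary_size xs) < r" if "length xs = n" for xs
    using boundary_size_le_length[of xs] that assms by linarith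
  then show ?thesis by (auto simp: large_words_def not_le[symmetric])
qed

lemma small_n_threshold:
  fixes t u :: real assumes "1 \<le> u" "u < 4" "9/2 < t"
  shows "u\<^sup>2 + 2 < t * u"
proof -
  have "0 \<le> (4 - u) * (u - 1/2)" using assms by simp
  then have "u\<^sup>2 + 2 \<le> 9/2 * u" by (simp add: power2_eq_square algebra_simps)
  also have "\<dots> < t * u" using assms by (intro mult_strict_right_mono) auto
  finally show ?thesis .
qed

lemma chernoff_optimised:
  fixes t u :: real
  assumes u: "4 \<le> u" "u\<^sup>2 = real n" and t: "9/2 < t"
  defines "l \<equiv> 3 * t / (4 * u)"
  shows "64 * cosh l ^ n * exp (- 3 * l / 4 * (t * u - 2)) \<le> 2 * exp (- (t ^ 2) / 32)"
proof -
  have l: "l > 0" using u t by (simp add: l_def)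
  have "64 * cosh l ^ n * exp (- 3 * l / 4 * (t * u - 2))
      \<le> 64 * exp (l\<^sup>2 / 2) ^ n * exp (- 3 * l / 4 * (t * u - 2))"
    using cosh_le_exp_square[OF l] l by (intro mult_right_mono mult_left_mono power_mono) auto
  also have "\<dots> = 64 * exp (real n * (l\<^sup>2 / 2) + - 3 * l / 4 * (t * u - 2))"
    by (simp only: exp_add exp_of_nat_mult mult.assoc)
  also have "real n * (l\<^sup>2 / 2) + - 3 * l / 4 * (t * u - 2) = - 9 * t\<^sup>2 / 32 + 9 / 8 * (t / u)"
    using u by (simp add: l_def u(2)[symmetric] power2_eq_square field_simps)
  also have "\<dots> \<le> - (t\<^sup>2) / 32 - 15 / 4"
  proof -
    have "t / u \<le> t / 4" using u t by (intro divide_left_mono) auto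
    moreover have "t\<^sup>2 / 4 - 9 * t / 32 - 15 / 4 = (t - 9/2) * (t/4 + 27/32) + 3/64"
      by (simp add: power2_eq_square field_simps)
    moreover have "0 \<le> (t - 9/2) * (t/4 + 27/32)" using t by simp
    ultimately show ?thesis by linarith
  qed
  finally have "64 * cosh l ^ n * exp (- 3 * l / 4 * (t * u - 2)) \<le> 64 * (exp (- (t\<^sup>2) / 32) / exp (15 / 4))"
    by (simp add: exp_diff)
  also have "\<dots> \<le> 64 * (exp (- (t\<^sup>2) / 32) / 32)"
    using exp_15_4_ge_32 by (intro mult_left_mono divide_left_mono) auto
  finally show ?thesis by simp
qed

theorem lemma3p5:
  fixes n :: nat and t :: real
  assumes "n \<ge> 1" and "t > 0"
  shows "measure_pmf.prob (word_root_pmf n)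
           {(xs, k). real (card (bdry (T xs k))) \<ge> t * sqrt (real n)}
         \<le> 2 * exp (- (t ^ 2) / 32)"
proof -
  define u where "u = sqrt (real n)"
  have u: "1 \<le> u" "u\<^sup>2 = real n" using assms(1) by (simp_all add: u_def)
  have P: "measure_pmf.prob (word_root_pmf n) {(xs, k). real (card (bdry (T xs k))) \<ge> t * u}
      = card (large_words n (t * u)) / 4 ^ n" by (rule prob_large_boundary)
  consider "t \<le> 9/2" | "9/2 < t" "u < 4" | "9/2 < t" "4 \<le> u" by linarith
  then show ?thesis
  proof cases
    case 1
    then show ?thesis using tail_bound_trivial[OF assms(2)] measure_pmf.prob_le_1 by (meson order_trans)
  next
    case 2
    have "real n + 2 < t * u" using small_n_threshold[OF u(1) 2(2,1)] u(2) by simp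
    then show ?thesis using P large_words_empty u_def by simp
  next
    case 3
    define l where "l = 3 * t / (4 * u)"
    have "card (large_words n (t * u)) / 4 ^ n \<le> 64 * cosh l ^ n * exp (- 3 * l / 4 * (t * u - 2))"
      using assms(2) u by (intro card_large_words_chernoff) (simp add: l_def)
    also have "\<dots> \<le> 2 * exp (- (t ^ 2) / 32)"
      unfolding l_def by (rule chernoff_optimised[OF 3(2) u(2) 3(1)])
    finally show ?thesis using P by (simp add: u_def)
  qed
qed

end
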